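(* Let $k\ge 4$ be an integer and let $f_k(X)=X^k-X^{k-1}-\cdots-X-1$. Let $\alpha_k$ denote the unique root of $f_k$ with $|\alpha_k|>1$ (it is real and greater than $1$), and let $\rho_1>\rho_2>\cdots>\rho_K$ be the distinct absolute values of the remaining roots of $f_k$ (all of which lie inside the unit disk). Then $$\frac{\rho_i}{\rho_j}>1+\frac{1}{10\,k^{9.6}\,(\pi/e)^k}\qquad\text{for all }1\le i<j\le K.$$
   Context: $f_k(X)=X^k-X^{k-1}-\cdots-X-1$ is the characteristic polynomial of the $k$-generalized Fibonacci sequence. It has exactly one root outside the closed unit disk, which is real and larger than $1$; all other roots have absolute value less than $1$. *)

theory Defs
  imports "HOL-Analysis.Analysis" "HOL-Computational_Algebra.Polynomial"
begin

definition fib_poly :: "nat \<Rightarrow> complex poly" where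
  "fib_poly k = monom 1 k - (\<Sum>j<k. monom 1 j)"

text \<open>The distinct absolute values of the roots of f_k lying inside the unit disk
  (i.e. all roots other than the dominant root alpha_k).\<close>
definition small_root_moduli :: "nat \<Rightarrow> real set" where
  "small_root_moduli k = {cmod z | z. poly (fib_poly k) z = 0 \<and> cmod z < 1}"

end

theory Submission
  imports Defs
begin

text \<open>Every root \<open>z\<close> of \<open>f\<^sub>k\<close> satisfies \<open>z\<^sup>k (z - 2) = -1\<close>, hence \<open>|z|\<^sup>2\<^sup>k |z - 2|\<^sup>2 = 1\<close>:
  the real part of a root is a function of its modulus, Lipschitz with constant \<open>O(k)\<close> on the
  roots in the unit disk. So two small roots in the same closed half-plane whose moduli differ
  by \<open>\<delta>\<close> are at distance \<open>O(\<surd>(k \<delta>))\<close>. On the other hand, distinct roots of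
  \<open>z\<^sup>k\<^sup>+\<^sup>1 - 2 z\<^sup>k + 1\<close> in the unit disk are at least \<open>1/(8k)\<close> apart: the derivative
  \<open>z\<^sup>k\<^sup>-\<^sup>1 ((k + 1) z - 2k)\<close> has modulus at least \<open>(k - 1)/3\<close> at such a root, and the difference
  quotient between two roots, which vanishes, differs from it by \<open>O(k\<^sup>2 |z - w|)\<close>.
  Since conjugation preserves roots and moduli, distinct small moduli differ by \<open>\<Omega>(k\<^sup>-\<^sup>3)\<close>,
  which is far more than the claimed bound.\<close>

lemma poly_fib_poly: "poly (fib_poly k) x = x ^ k - (\<Sum>j<k. x ^ j)"
  by (simp add: fib_poly_def poly_monom poly_sum)

lemma fib_poly_root_eq:
  assumes "poly (fib_poly k) x = 0"
  shows "x ^ k * (x - 2) = -1"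
proof -
  have "x ^ k - 1 = (x - 1) * (\<Sum>j<k. x ^ j)"
    by (rule power_diff_1_eq)
  also have "(\<Sum>j<k. x ^ j) = x ^ k"
    using assms by (simp add: poly_fib_poly)
  finally show ?thesis
    by (simp add: algebra_simps)
qed

lemma norm_power_diff_le:
  fixes z w :: "'a::real_normed_field"
  assumes "norm z \<le> 1" "norm w \<le> 1"
  shows "norm (w ^ n - z ^ n) \<le> real n * norm (w - z)"
proof (induction n)
  case (Suc n)
  have "w ^ Suc n - z ^ Suc n = w * (w ^ n - z ^ n) + (w - z) * z ^ n"
    by (simp add: algebra_simps)
  moreover have "norm (w * (w ^ n - z ^ n)) \<le> norm (w ^ n - z ^ n)"
    using assms by (simp add: norm_mult mult_left_le_one_le)
  moreover have "norm ((w - z) * z ^ n) \<le> norm (w - z)"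
    using assms by (simp add: norm_mult norm_power mult_left_le power_le_one)
  ultimately show ?case
    using Suc norm_triangle_ineq[of "w * (w ^ n - z ^ n)" "(w - z) * z ^ n"]
    by (simp add: distrib_right)
qed simp

lemma sum_lessThan_le_half_square: "(\<Sum>i<n. real i) \<le> real n ^ 2 / 2"
  by (induction n) (auto simp: power2_eq_square field_simps)

text \<open>The sum is the difference quotient \<open>(z\<^sup>n - w\<^sup>n)/(z - w)\<close> (cf. \<open>power_diff_sumr2\<close>),
  compared with the derivative \<open>n z\<^sup>n\<^sup>-\<^sup>1\<close>.\<close>
lemma norm_power_diff_quotient_minus_deriv_le:
  fixes z w :: "'a::real_normed_field"
  assumes z: "norm z \<le> 1" and w: "norm w \<le> 1"
  shows "norm ((\<Sum>i<n. w ^ (n - Suc i) * z ^ i) - of_nat n * z ^ (n - 1))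
           \<le> real n ^ 2 / 2 * norm (w - z)"
proof -
  have "(\<Sum>i<n. w ^ (n - Suc i) * z ^ i) - of_nat n * z ^ (n - 1)
        = (\<Sum>i<n. (w ^ (n - Suc i) - z ^ (n - Suc i)) * z ^ i)"
  proof -
    have "(\<Sum>i<n. z ^ (n - Suc i) * z ^ i) = (\<Sum>i<n. z ^ (n - 1))"
      by (intro sum.cong) (auto simp: power_add[symmetric])
    then show ?thesis
      by (simp add: sum_subtractf left_diff_distrib)
  qed
  also have "norm \<dots> \<le> (\<Sum>i<n. real (n - Suc i) * norm (w - z))"
  proof (intro order.trans[OF norm_sum] sum_mono)
    fix i
    have "norm (z ^ i) \<le> 1"
      using z by (simp add: norm_power power_le_one)
    then show "norm ((w ^ (n - Suc i) - z ^ (n - Suc i)) * z ^ i) \<le> real (n - Suc i) * norm (w - z)"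
      using norm_power_diff_le[OF z w, of "n - Suc i"] unfolding norm_mult
      by (meson mult_right_le_one_le norm_ge_zero order_trans)
  qed
  also have "\<dots> = (\<Sum>i<n. real i * norm (w - z))"
    by (rule sum.nat_diff_reindex)
  also have "\<dots> = (\<Sum>i<n. real i) * norm (w - z)"
    by (simp add: sum_distrib_right)
  also have "\<dots> \<le> real n ^ 2 / 2 * norm (w - z)"
    by (intro mult_right_mono sum_lessThan_le_half_square) simp
  finally show ?thesis .
qed

lemma sq_diff_le_abs_sq_diff:
  fixes p q :: real
  assumes "0 \<le> p * q"
  shows "(p - q)^2 \<le> \<bar>p^2 - q^2\<bar>"
proof -
  have "(p - q)^2 = (\<bar>p\<bar> - \<bar>q\<bar>)^2"
    using assms by (simp add: power2_eq_square algebra_simps abs_mult[symmetric])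
  also have "\<dots> = \<bar>\<bar>p\<bar> - \<bar>q\<bar>\<bar> * \<bar>\<bar>p\<bar> - \<bar>q\<bar>\<bar>"
    by (simp add: power2_eq_square)
  also have "\<dots> \<le> \<bar>\<bar>p\<bar> - \<bar>q\<bar>\<bar> * (\<bar>p\<bar> + \<bar>q\<bar>)"
    by (intro mult_left_mono) auto
  also have "\<dots> = \<bar>(\<bar>p\<bar> - \<bar>q\<bar>) * (\<bar>p\<bar> + \<bar>q\<bar>)\<bar>"
    by (simp add: abs_mult)
  also have "\<dots> = \<bar>p^2 - q^2\<bar>"
    by (simp add: power2_eq_square algebra_simps)
  finally show ?thesis .
qed

lemma root_norm_eq:
  assumes "x ^ k * (x - 2) = -1"
  shows "cmod x ^ k * cmod (x - 2) = 1"
  using arg_cong[OF assms, of cmod] by (simp add: norm_mult norm_power)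

lemma root_norm_power_ge:
  assumes "x ^ k * (x - 2) = -1" "cmod x \<le> 1"
  shows "1/3 \<le> cmod x ^ k"
proof -
  have "cmod (x - 2) \<le> 3"
    using norm_triangle_ineq4[of x 2] assms(2) by simp
  then have "1 \<le> cmod x ^ k * 3"
    using root_norm_eq[OF assms(1)] mult_left_mono[of "cmod (x - 2)" 3 "cmod x ^ k"] by simp
  then show ?thesis
    by simp
qed

lemma root_Re_eq:
  assumes "x ^ k * (x - 2) = -1"
  shows "Re x = (cmod x ^ 2 + 4 - 1 / (cmod x ^ k)^2) / 4"
proof -
  have "(cmod x ^ k)^2 * cmod (x - 2) ^ 2 = 1"
    using root_norm_eq[OF assms] by (metis power_mult_distrib power_one)
  then have "cmod (x - 2) ^ 2 = 1 / (cmod x ^ k)^2"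
    by (metis divide_eq_eq mult.commute mult_zero_left zero_neq_one)
  moreover have "cmod (x - 2) ^ 2 = cmod x ^ 2 - 4 * Re x + 4"
    by (simp only: cmod_power2) (simp add: power2_eq_square algebra_simps)
  ultimately have "cmod x ^ 2 - 4 * Re x + 4 = 1 / (cmod x ^ k)^2"
    by simp
  then show ?thesis
    by simp
qed

lemma root_deriv_norm_ge:
  assumes z: "z ^ k * (z - 2) = -1" and z1: "cmod z \<le> 1"
  shows "(real k - 1) / 3 \<le> cmod (z ^ (k - 1) * (of_nat (Suc k) * z - 2 * of_nat k))"
proof (cases "k = 0")
  case False
  have "1/3 \<le> cmod z ^ (k - 1)"
    using root_norm_power_ge[OF z z1] power_decreasing[of "k - 1" k "cmod z"] z1 by simp
  moreover have "real k - 1 \<le> cmod (of_nat (Suc k) * z - 2 * of_nat k)"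
  proof -
    have "cmod (of_nat (Suc k) * z) \<le> real (Suc k)"
      using z1 by (simp add: norm_mult mult_left_le del: of_nat_Suc)
    then show ?thesis
      using norm_triangle_ineq2[of "2 * of_nat k" "of_nat (Suc k) * z :: complex"]
      by (simp add: norm_minus_commute)
  qed
  ultimately have "1/3 * (real k - 1) \<le> cmod z ^ (k - 1) * cmod (of_nat (Suc k) * z - 2 * of_nat k)"
    using False by (intro mult_mono) auto
  then show ?thesis
    by (simp add: norm_mult norm_power)
qed (simp add: order_trans[OF _ norm_ge_zero])

lemma root_separation:
  fixes z w :: complex
  assumes k: "k \<ge> 4" and z: "z ^ k * (z - 2) = -1" and w: "w ^ k * (w - 2) = -1"
    and "z \<noteq> w" and z1: "cmod z \<le> 1" and w1: "cmod w \<le> 1"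
  shows "1 / (8 * real k) \<le> cmod (z - w)"
proof -
  define S where "S n = (\<Sum>i<n. w ^ (n - Suc i) * z ^ i)" for n
  define d where "d = cmod (w - z)"
  define c where "c = real (Suc k) ^ 2 / 2 + real k ^ 2"
  obtain m where km: "k = Suc m"
    using k by (cases k) auto
  have quotient: "(z - w) * S n = z ^ n - w ^ n" for n
    unfolding S_def by (rule power_diff_sumr2[symmetric])
  have "(z - w) * (S (Suc k) - 2 * S k) = (z ^ Suc k - w ^ Suc k) - 2 * (z ^ k - w ^ k)"
    by (simp only: right_diff_distrib mult.left_commute[of "z - w"] quotient)
  also have "\<dots> = 0"
  proof -
    have "z ^ Suc k = 2 * z ^ k - 1" "w ^ Suc k = 2 * w ^ k - 1"
      using z w by (simp_all add: algebra_simps)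
    then show ?thesis
      by simp
  qed
  finally have S_eq: "S (Suc k) = 2 * S k"
    using \<open>z \<noteq> w\<close> by simp
  \<comment> \<open>the derivative of \<open>z\<^sup>k\<^sup>+\<^sup>1 - 2 z\<^sup>k\<close> at \<open>z\<close>\<close>
  define D where "D = z ^ m * (of_nat (Suc k) * z - 2 * of_nat k)"
  have "D = (of_nat (Suc k) * z ^ k - S (Suc k)) + 2 * (S k - of_nat k * z ^ m)"
    using S_eq unfolding D_def km by (simp add: algebra_simps)
  then have "cmod D \<le> cmod (S (Suc k) - of_nat (Suc k) * z ^ k) + 2 * cmod (S k - of_nat k * z ^ m)"
    by (metis norm_minus_commute norm_mult norm_numeral norm_triangle_ineq)
  also have "\<dots> \<le> real (Suc k) ^ 2 / 2 * d + 2 * (real k ^ 2 / 2 * d)"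
    using norm_power_diff_quotient_minus_deriv_le[OF z1 w1, of "Suc k"]
      norm_power_diff_quotient_minus_deriv_le[OF z1 w1, of k]
    unfolding S_def d_def km by (intro add_mono) auto
  finally have D_le: "cmod D \<le> c * d"
    unfolding c_def by (simp add: algebra_simps)
  have "(real k - 1) / 3 \<le> cmod D"
    using root_deriv_norm_ge[OF z z1] unfolding D_def km by simp
  moreover have "c * (1 / (8 * real k)) \<le> (real k - 1) / 3"
  proof -
    have "real k * 28 \<le> real k * (real k * 7)"
      using k by (intro mult_left_mono) auto
    then have "3 + real k * 22 \<le> real k * (real k * 7)"
      using k by linarith
    then show ?thesis
      using k unfolding c_def by (simp add: field_simps power2_eq_square)
  qed
  ultimately have "c * (1 / (8 * real k)) \<le> c * d"
    using D_le by linarith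
  moreover have "0 < c"
    unfolding c_def by (simp add: add_pos_nonneg)
  ultimately have "1 / (8 * real k) \<le> d"
    by (rule mult_left_le_imp_le)
  then show ?thesis
    unfolding d_def by (simp add: norm_minus_commute)
qed

lemma inverse_sq_power_diff_le:
  fixes r s :: real
  assumes "0 \<le> s" "s \<le> r" "r \<le> 1" and s_pow: "1/3 \<le> s ^ k"
  shows "1 / (s ^ k)^2 - 1 / (r ^ k)^2 \<le> 162 * real k * (r - s)"
proof -
  define A C where "A = (r ^ k)^2" and "C = (s ^ k)^2"
  have "1/9 \<le> C"
    unfolding C_def using power_mono[OF s_pow, of 2] by (simp add: power2_eq_square)
  moreover have "C \<le> A"
    unfolding A_def C_def using assms by (intro power_mono) auto
  ultimately have "1 / C - 1 / A = (A - C) / (A * C)" "1/81 \<le> A * C"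
    using mult_mono[of "1/9" A "1/9" C] by (auto simp: field_simps)
  moreover have "(A - C) / (A * C) \<le> (A - C) / (1/81)"
    using \<open>C \<le> A\<close> \<open>1/81 \<le> A * C\<close> by (intro divide_left_mono) auto
  ultimately have "1 / C - 1 / A \<le> 81 * (A - C)"
    by simp
  also have "A - C = r ^ (2 * k) - s ^ (2 * k)"
    unfolding A_def C_def by (simp add: power_mult[symmetric] mult.commute)
  also have "\<dots> \<le> real (2 * k) * (r - s)"
    using norm_power_diff_le[of s r "2 * k"] assms by simp
  finally show ?thesis
    unfolding A_def C_def by simp
qed

lemma root_Re_diff_le:
  fixes z w :: complex
  assumes z: "z ^ k * (z - 2) = -1" and w: "w ^ k * (w - 2) = -1"
    and z1: "cmod z \<le> 1" and w1: "cmod w \<le> 1" and le: "cmod w \<le> cmod z"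
  shows "0 \<le> Re z - Re w" "4 * (Re z - Re w) \<le> (2 + 162 * real k) * (cmod z - cmod w)"
proof -
  define r s where "r = cmod z" and "s = cmod w"
  define E where "E = 1 / (s ^ k)^2 - 1 / (r ^ k)^2"
  define a where "a = Re z - Re w"
  have rs: "0 \<le> s" "s \<le> r" "r \<le> 1"
    using z1 le unfolding r_def s_def by auto
  have Re_diff: "4 * a = (r^2 - s^2) + E"
    unfolding a_def E_def r_def s_def root_Re_eq[OF z] root_Re_eq[OF w] by (simp add: field_simps)
  have "r^2 - s^2 = (r + s) * (r - s)"
    by (simp add: power2_eq_square algebra_simps)
  then have rs2: "0 \<le> r^2 - s^2" "r^2 - s^2 \<le> 2 * (r - s)"
    using rs mult_right_mono[of "r + s" 2 "r - s"] by auto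
  have sk: "s ^ k \<le> r ^ k" "0 < s ^ k"
    using rs root_norm_power_ge[OF w w1] unfolding s_def by (auto intro: power_mono)
  have "(s ^ k)^2 \<le> (r ^ k)^2" "0 < (s ^ k)^2"
    by (rule power_mono[OF sk(1) less_imp_le[OF sk(2)]], rule zero_less_power[OF sk(2)])
  then have "1 / (r ^ k)^2 \<le> 1 / (s ^ k)^2"
    by (metis frac_le order.refl zero_le_one)
  then have E_nonneg: "0 \<le> E"
    unfolding E_def by simp
  have E_le: "E \<le> 162 * real k * (r - s)"
    unfolding E_def
    using inverse_sq_power_diff_le[OF rs] root_norm_power_ge[OF w w1] unfolding s_def by simp
  have "0 \<le> a"
    using Re_diff rs2 E_nonneg by linarith
  moreover have "(2 + 162 * real k) * (r - s) = 2 * (r - s) + 162 * real k * (r - s)"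
    by (simp add: algebra_simps)
  then have "4 * a \<le> (2 + 162 * real k) * (r - s)"
    using Re_diff rs2 E_le by linarith
  ultimately show "0 \<le> Re z - Re w" "4 * (Re z - Re w) \<le> (2 + 162 * real k) * (cmod z - cmod w)"
    unfolding a_def r_def s_def by simp_all
qed

lemma root_dist_sq_le:
  fixes z w :: complex
  assumes "z ^ k * (z - 2) = -1" "w ^ k * (w - 2) = -1"
    and z1: "cmod z \<le> 1" and w1: "cmod w \<le> 1" and le: "cmod w \<le> cmod z"
    and same_half_plane: "0 \<le> Im z * Im w"
  shows "cmod (z - w) ^ 2 \<le> (4 + 162 * real k) * (cmod z - cmod w)"
proof -
  define a where "a = Re z - Re w"
  have a_bounds: "0 \<le> a" "4 * a \<le> (2 + 162 * real k) * (cmod z - cmod w)"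
    using root_Re_diff_le[OF assms(1-5)] unfolding a_def by auto
  have Re_sum: "\<bar>Re z + Re w\<bar> \<le> 2" and "a \<le> 2"
    using abs_Re_le_cmod[of z] abs_Re_le_cmod[of w] z1 w1 unfolding a_def by linarith+
  then have "a^2 \<le> 2 * a"
    using \<open>0 \<le> a\<close> by (simp add: power2_eq_square mult_right_mono)
  have "(Im z - Im w)^2 \<le> \<bar>Im z ^ 2 - Im w ^ 2\<bar>"
    by (rule sq_diff_le_abs_sq_diff[OF same_half_plane])
  also have "Im z ^ 2 - Im w ^ 2 = (cmod z ^ 2 - cmod w ^ 2) - a * (Re z + Re w)"
    unfolding a_def cmod_power2 by (simp add: power2_eq_square algebra_simps)
  also have "\<bar>\<dots>\<bar> \<le> (cmod z ^ 2 - cmod w ^ 2) + a * 2"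
  proof -
    have "0 \<le> cmod z ^ 2 - cmod w ^ 2"
      using le by (simp add: power_mono)
    moreover have "\<bar>a * (Re z + Re w)\<bar> \<le> a * 2"
      using Re_sum \<open>0 \<le> a\<close> by (simp add: abs_mult mult_left_mono)
    ultimately show ?thesis
      by linarith
  qed
  also have "cmod z ^ 2 - cmod w ^ 2 \<le> 2 * (cmod z - cmod w)"
  proof -
    have "cmod z ^ 2 - cmod w ^ 2 = (cmod z + cmod w) * (cmod z - cmod w)"
      by (simp add: power2_eq_square algebra_simps)
    then show ?thesis
      using z1 w1 le mult_right_mono[of "cmod z + cmod w" 2 "cmod z - cmod w"] by simp
  qed
  finally have "(Im z - Im w)^2 \<le> 2 * (cmod z - cmod w) + 2 * a"
    by simp
  moreover have "cmod (z - w) ^ 2 = a^2 + (Im z - Im w)^2"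
    unfolding a_def by (simp add: cmod_power2)
  ultimately show ?thesis
    using a_bounds \<open>a^2 \<le> 2 * a\<close> by (simp add: algebra_simps)
qed

lemma small_root_moduli_bounds:
  assumes "\<rho> \<in> small_root_moduli k"
  shows "0 < \<rho>" "\<rho> < 1"
proof -
  obtain z where z: "z ^ k * (z - 2) = -1" "\<rho> = cmod z" "cmod z < 1"
    using assms fib_poly_root_eq unfolding small_root_moduli_def by blast
  have "z \<noteq> 0"
    using z(1) by (cases k) auto
  then show "0 < \<rho>" "\<rho> < 1"
    using z by auto
qed

lemma small_root_moduli_gap:
  assumes k: "k \<ge> 4" and \<rho>: "\<rho> \<in> small_root_moduli k" and \<sigma>: "\<sigma> \<in> small_root_moduli k"
    and "\<sigma> < \<rho>"
  shows "1 / (16384 * real k ^ 3) \<le> \<rho> - \<sigma>"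
proof -
  obtain z where z: "z ^ k * (z - 2) = -1" "\<rho> = cmod z" "cmod z < 1"
    using \<rho> fib_poly_root_eq unfolding small_root_moduli_def by blast
  obtain w0 where w0: "w0 ^ k * (w0 - 2) = -1" "\<sigma> = cmod w0" "cmod w0 < 1"
    using \<sigma> fib_poly_root_eq unfolding small_root_moduli_def by blast
  define w where "w = (if 0 \<le> Im z * Im w0 then w0 else cnj w0)"
  have "cnj w0 ^ k * (cnj w0 - 2) = -1"
    using arg_cong[OF w0(1), of cnj] by simp
  then have w: "w ^ k * (w - 2) = -1" "\<sigma> = cmod w" "cmod w < 1" "0 \<le> Im z * Im w"
    using w0 unfolding w_def by auto
  have "z \<noteq> w"
    using z(2) w(2) \<open>\<sigma> < \<rho>\<close> by auto
  have "1 / (8 * real k) \<le> cmod (z - w)"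
    using z w by (intro root_separation[OF k _ _ \<open>z \<noteq> w\<close>]) auto
  then have "(1 / (8 * real k))^2 \<le> cmod (z - w) ^ 2"
    using k by (intro power_mono) auto
  also have "\<dots> \<le> (4 + 162 * real k) * (\<rho> - \<sigma>)"
    using root_dist_sq_le[OF z(1) w(1)] z w \<open>\<sigma> < \<rho>\<close> by simp
  also have "\<dots> \<le> 256 * real k * (\<rho> - \<sigma>)"
    using k \<open>\<sigma> < \<rho>\<close> by (intro mult_right_mono) auto
  finally show ?thesis
    using k by (simp add: field_simps power2_eq_square power3_eq_cube)
qed

lemma cube_less_powr_bound:
  assumes "k \<ge> (4::nat)"
  shows "16384 * real k ^ 3 < 10 * real k powr 9.6 * (pi / exp 1) ^ k"
proof -
  have k: "4 \<le> real k"
    using assms by simp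
  have "16384 * real k ^ 3 < 10 * 4 ^ 6 * real k ^ 3"
    using k by simp
  also have "\<dots> \<le> 10 * real k ^ 6 * real k ^ 3"
    using k by (intro mult_right_mono mult_left_mono power_mono) auto
  also have "\<dots> = 10 * real k powr 9"
    using k by (simp add: powr_realpow power_add[symmetric])
  also have "\<dots> \<le> 10 * real k powr 9.6"
    using k by (intro mult_left_mono powr_mono) auto
  also have "\<dots> \<le> 10 * real k powr 9.6 * (pi / exp 1) ^ k"
  proof -
    have "exp 1 < pi"
      using e_less_272 pi_gt3 by linarith
    then show ?thesis
      by (intro mult_le_cancel_left1[THEN iffD2] one_le_power) auto
  qed
  finally show ?thesis .
qed

theorem theorem1:
  fixes k :: nat and \<rho>i \<rho>j :: real
  assumes "k \<ge> 4"
    and "\<rho>i \<in> small_root_moduli k" and "\<rho>j \<in> small_root_moduli k"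
    and "\<rho>i > \<rho>j"
  shows "\<rho>i / \<rho>j > 1 + 1 / (10 * real k powr 9.6 * (pi / exp 1) ^ k)"
proof -
  have \<rho>j: "0 < \<rho>j" "\<rho>j < 1"
    using small_root_moduli_bounds[OF assms(3)] by auto
  have "1 / (10 * real k powr 9.6 * (pi / exp 1) ^ k) < 1 / (16384 * real k ^ 3)"
    using cube_less_powr_bound[OF assms(1)] assms(1) by (intro divide_strict_left_mono) auto
  also have "\<dots> \<le> \<rho>i - \<rho>j"
    using small_root_moduli_gap[OF assms] .
  also have "\<dots> \<le> (\<rho>i - \<rho>j) / \<rho>j"
    using \<rho>j assms(4) by (simp add: le_divide_eq mult_left_le)
  also have "\<dots> = \<rho>i / \<rho>j - 1"
    using \<rho>j by (simp add: diff_divide_distrib)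
  finally show ?thesis
    by simp
qed

end
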